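(* Let $\mathcal{G}$ be a reaction network with species $X_1,\dots,X_n$ and reactions $\mathbf{y}\to\mathbf{y}'$ ($\mathbf{y},\mathbf{y}'\in\mathbb{Z}^n_{\ge 0}$, $\mathbf{y}\neq\mathbf{y}'$). For every choice of $n$ distinct reactions $\mathbf{y}_1\to\mathbf{y}'_1,\dots,\mathbf{y}_n\to\mathbf{y}'_n$ of $\mathcal{G}$ consider the number $$P=\det(\mathbf{y}_1,\dots,\mathbf{y}_n)\,\det(\mathbf{y}'_1-\mathbf{y}_1,\dots,\mathbf{y}'_n-\mathbf{y}_n),$$ where the determinants are of the $n\times n$ matrices with the indicated columns. Then $\mathcal{G}$ is injective if and only if all such numbers $P$ that are nonzero have the same sign and at least one of them is nonzero.
   Context: A reaction network with species $X_1,\dots,X_n$ is a finite set of reactions $\mathbf{y}\to\mathbf{y}'$ with $\mathbf{y}\ne\mathbf{y}'\in\mathbb{Z}^n_{\ge0}$ (the vectors of stoichiometric coefficients of reactants and products). Given rate constants $\mathbf{k}=(k_{\mathbf{y}\to\mathbf{y}'})$, all positive, the mass-action vector field is $\mathbf{f}(\mathbf{x},\mathbf{k})=\sum_{\mathbf{y}\to\mathbf{y}'}k_{\mathbf{y}\to\mathbf{y}'}\mathbf{x}^{\mathbf{y}}(\mathbf{y}'-\mathbf{y})$ for $\mathbf{x}\in\mathbb{R}^n_{>0}$, where $\mathbf{x}^{\mathbf{y}}=x_1^{y_1}\cdots x_n^{y_n}$. The network is called injective if for every choice of positive rate constants $\mathbf{k}$ the map $\mathbf{x}\mapsto\mathbf{f}(\mathbf{x},\mathbf{k})$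 is injective on $\mathbb{R}^n_{>0}$. *)

theory Defs
  imports "HOL-Analysis.Analysis"
begin

text \<open>Species are indexed by a finite type 'n (so n = CARD('n)). A complex is a
vector in nat ^ 'n; a reaction is a pair (y, y'); a reaction network is a finite
set of reactions with y \<noteq> y'.\<close>

type_synonym 'n complex = "nat ^ 'n"
type_synonym 'n reaction = "'n complex \<times> 'n complex"

definition reaction_network :: "'n::finite reaction set \<Rightarrow> bool" where
  "reaction_network G \<longleftrightarrow> finite G \<and> (\<forall>(y, y') \<in> G. y \<noteq> y')"

definition real_vec :: "nat ^ 'n::finite \<Rightarrow> real ^ 'n" where
  "real_vec y = (\<chi> i. real (y $ i))"

definition monom :: "real ^ 'n::finite \<Rightarrow> nat ^ 'n \<Rightarrow> real" where
  "monom x y = (\<Prod>i\<in>UNIV. (x $ i) ^ (y $ i))"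

definition mass_action ::
  "'n::finite reaction set \<Rightarrow> ('n reaction \<Rightarrow> real) \<Rightarrow> real ^ 'n \<Rightarrow> real ^ 'n" where
  "mass_action G k x = (\<Sum>r\<in>G. (k r * monom x (fst r)) *\<^sub>R (real_vec (snd r) - real_vec (fst r)))"

definition pos_orthant :: "(real ^ 'n::finite) set" where
  "pos_orthant = {x. \<forall>i. x $ i > 0}"

definition injective_network :: "'n::finite reaction set \<Rightarrow> bool" where
  "injective_network G \<longleftrightarrow>
     (\<forall>k. (\<forall>r\<in>G. k r > 0) \<longrightarrow> inj_on (mass_action G k) pos_orthant)"

definition cols_matrix :: "('n::finite \<Rightarrow> real ^ 'n) \<Rightarrow> real ^ 'n ^ 'n" where
  "cols_matrix v = (\<chi> j i. v i $ j)"

text \<open>For a choice of n distinct reactions (an injective map from the column index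
set into G), the number P = det(y_1..y_n) * det(y'_1 - y_1, .., y'_n - y_n).\<close>
definition det_product :: "('n::finite \<Rightarrow> 'n reaction) \<Rightarrow> real" where
  "det_product \<sigma> =
     det (cols_matrix (\<lambda>i. real_vec (fst (\<sigma> i)))) *
     det (cols_matrix (\<lambda>i. real_vec (snd (\<sigma> i)) - real_vec (fst (\<sigma> i))))"

end

theory Submission
  imports Defs
begin

text \<open>For rate constants \<kappa> > 0 let M(\<kappa>) be the sum over reactions r = (y, y') of
\<kappa>(r) (y' - y) y^T. Substituting x = exp u turns f(a) - f(b) into M(\<kappa>) (ln a - ln b),
where \<kappa>(r) = k(r) b^y (e^s - 1)/s with s = y \<bullet> (ln a - ln b) is a positive rescaling of k;
conversely every \<kappa> > 0 with a kernel vector w of M(\<kappa>) arises in this way from a = exp w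
and b = 1. Hence the network is injective iff det M(\<kappa>) \<noteq> 0 for all \<kappa> > 0. Multiplying out
the Leibniz formula for det M(\<kappa>) and averaging over permutations of the columns gives
n! det M(\<kappa>) = \<Sum>\<sigma>. \<kappa>(\<sigma> 1) \<cdots> \<kappa>(\<sigma> n) P(\<sigma>), summed over the injective choices \<sigma> of n
reactions: a polynomial whose coefficients are the numbers P.
It has no zero on the positive orthant iff its nonzero coefficients share a sign and one
of them exists: a coefficient P(\<sigma>) can be made to dominate by shrinking all rate constants
outside the range of \<sigma>, so two coefficients of opposite signs make the polynomial change
sign, and it vanishes somewhere on the segment joining the two choices of \<kappa>.\<close>

definition injections :: "'a set \<Rightarrow> ('n::finite \<Rightarrow> 'a) set" where
  "injections G = {\<sigma>. inj \<sigma> \<and> range \<sigma> \<subseteq> G}"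

definition injection_poly ::
  "'a set \<Rightarrow> (('n::finite \<Rightarrow> 'a) \<Rightarrow> real) \<Rightarrow> ('a \<Rightarrow> real) \<Rightarrow> real" where
  "injection_poly G P \<kappa> = (\<Sum>\<sigma>\<in>injections G. (\<Prod>j\<in>UNIV. \<kappa> (\<sigma> j)) * P \<sigma>)"

lemma finite_injections: "finite G \<Longrightarrow> finite (injections G :: ('n::finite \<Rightarrow> 'a) set)"
  by (rule finite_subset[OF _ finite_PiE[of UNIV "\<lambda>_. G"]]) (auto simp: injections_def PiE_UNIV_domain)

lemma range_eq_if_inj_subset:
  fixes \<sigma> \<tau> :: "'n::finite \<Rightarrow> 'a"
  assumes "inj \<sigma>" "inj \<tau>" "range \<tau> \<subseteq> range \<sigma>"
  shows "range \<tau> = range \<sigma>"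
  using assms by (intro card_subset_eq) (auto simp: card_image)

lemma prod_le_factor:
  fixes f :: "'a \<Rightarrow> 'b::linordered_semidom"
  assumes "finite A" "j \<in> A" "\<And>i. i \<in> A \<Longrightarrow> 0 \<le> f i \<and> f i \<le> 1"
  shows "prod f A \<le> f j"
proof -
  have "prod f A = f j * prod f (A - {j})"
    using assms(1,2) by (rule prod.remove)
  also have "\<dots> \<le> f j"
    using assms by (intro mult_left_le prod_le_1) auto
  finally show ?thesis .
qed

lemma prod_weight_le_if_range_ne:
  fixes \<sigma> \<tau> :: "'n::finite \<Rightarrow> 'a" and \<epsilon> :: real
  assumes "inj \<sigma>" "inj \<tau>" "range \<tau> \<noteq> range \<sigma>" "0 \<le> \<epsilon>" "\<epsilon> \<le> 1"
  shows "(\<Prod>j\<in>UNIV. if \<tau> j \<in> range \<sigma> then 1 else \<epsilon>) \<le> \<epsilon>"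
proof -
  have "\<not> range \<tau> \<subseteq> range \<sigma>"
    using assms range_eq_if_inj_subset[of \<sigma> \<tau>] by blast
  then obtain j0 where j0: "\<tau> j0 \<notin> range \<sigma>"
    by blast
  have "(\<Prod>j\<in>UNIV. if \<tau> j \<in> range \<sigma> then 1 else \<epsilon>) \<le> (if \<tau> j0 \<in> range \<sigma> then 1 else \<epsilon>)"
    using assms(4,5) by (intro prod_le_factor) auto
  then show ?thesis
    using j0 by simp
qed

lemma neg_abs_le_mult:
  fixes p x \<epsilon> :: real
  assumes "0 \<le> p" "p \<le> \<epsilon>"
  shows "- \<epsilon> * \<bar>x\<bar> \<le> p * x"
proof -
  have "p * (- \<bar>x\<bar>) \<le> p * x"
    using assms(1) by (intro mult_left_mono) auto
  moreover have "p * \<bar>x\<bar> \<le> \<epsilon> * \<bar>x\<bar>"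
    using assms(2) by (intro mult_right_mono) auto
  ultimately show ?thesis
    by simp
qed

lemma injection_poly_scale:
  "injection_poly G (\<lambda>\<sigma>. c * P \<sigma>) \<kappa> = c * injection_poly G P \<kappa>"
  by (simp add: injection_poly_def sum_distrib_left mult_ac)

lemma prod_pos_injection:
  "\<forall>r\<in>G. \<kappa> r > 0 \<Longrightarrow> \<sigma> \<in> injections G \<Longrightarrow> (\<Prod>j\<in>UNIV. \<kappa> (\<sigma> j)) > (0::real)"
  by (intro prod_pos) (auto simp: injections_def)

lemma injection_poly_pos:
  assumes "finite G" and \<sigma>: "\<sigma> \<in> injections G" "P \<sigma> > 0"
    and nonneg: "\<forall>\<tau>\<in>injections G. P \<tau> \<ge> 0" and \<kappa>: "\<forall>r\<in>G. \<kappa> r > 0"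
  shows "injection_poly G P \<kappa> > 0"
proof -
  have "0 < (\<Prod>j\<in>UNIV. \<kappa> (\<sigma> j)) * P \<sigma>"
    using prod_pos_injection[OF \<kappa> \<sigma>(1)] \<sigma>(2) by simp
  also have "\<dots> \<le> injection_poly G P \<kappa>"
    unfolding injection_poly_def using assms finite_injections
    by (intro member_le_sum) (auto intro: mult_nonneg_nonneg less_imp_le prod_pos_injection)
  finally show ?thesis .
qed

lemma injection_poly_pos_witness:
  fixes P :: "('n::finite \<Rightarrow> 'a) \<Rightarrow> real"
  assumes "finite G" and \<sigma>: "\<sigma> \<in> injections G" "P \<sigma> > 0"
    and range_inv: "\<And>\<sigma> \<tau>. \<sigma> \<in> injections G \<Longrightarrow> \<tau> \<in> injections G \<Longrightarrow> range \<sigma> = range \<tau> \<Longrightarrow> P \<sigma> = P \<tau>"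
  shows "\<exists>\<kappa>. (\<forall>r. \<kappa> r > 0) \<and> injection_poly G P \<kappa> > 0"
proof -
  define B where "B = (\<Sum>\<tau>\<in>injections G. \<bar>P \<tau>\<bar>)"
  define \<epsilon> where "\<epsilon> = P \<sigma> / (B + P \<sigma>)"
  define \<kappa> where "\<kappa> r = (if r \<in> range \<sigma> then 1 else \<epsilon>)" for r
  have "B \<ge> 0"
    unfolding B_def by (intro sum_nonneg) auto
  then have \<epsilon>: "0 < \<epsilon>" "\<epsilon> \<le> 1" "\<epsilon> * B < P \<sigma>"
    using \<sigma>(2) by (auto simp: \<epsilon>_def field_simps)
  have \<kappa>_pos: "\<kappa> r > 0" for r
    using \<epsilon> by (simp add: \<kappa>_def)
  have term_lower: "(\<Prod>j\<in>UNIV. \<kappa> (\<tau> j)) * P \<tau> \<ge> - \<epsilon> * \<bar>P \<tau>\<bar>" if \<tau>: "\<tau> \<in> injections G" for \<tau>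
  proof (cases "range \<tau> = range \<sigma>")
    case True
    then have "(\<Prod>j\<in>UNIV. \<kappa> (\<tau> j)) = 1"
      by (auto simp: \<kappa>_def True[symmetric] intro!: prod.neutral)
    then show ?thesis
      using range_inv[OF \<tau> \<sigma>(1) True] \<sigma>(2) mult_pos_pos[OF \<epsilon>(1) \<sigma>(2)] by simp
  next
    case False
    have "(\<Prod>j\<in>UNIV. \<kappa> (\<tau> j)) \<le> \<epsilon>"
      using prod_weight_le_if_range_ne[of \<sigma> \<tau> \<epsilon>] \<sigma>(1) \<tau> False \<epsilon>(1,2)
      by (simp add: \<kappa>_def injections_def)
    moreover have "(\<Prod>j\<in>UNIV. \<kappa> (\<tau> j)) \<ge> 0"
      using less_imp_le[OF \<kappa>_pos] by (intro prod_nonneg) simp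
    ultimately show ?thesis
      by (intro neg_abs_le_mult)
  qed
  have "(\<Prod>j\<in>UNIV. \<kappa> (\<sigma> j)) = 1"
    by (simp add: \<kappa>_def)
  then have "injection_poly G P \<kappa> = P \<sigma> + (\<Sum>\<tau>\<in>injections G - {\<sigma>}. (\<Prod>j\<in>UNIV. \<kappa> (\<tau> j)) * P \<tau>)"
    unfolding injection_poly_def
    by (simp add: sum.remove[OF finite_injections[OF \<open>finite G\<close>] \<sigma>(1)])
  moreover have "- \<epsilon> * (\<Sum>\<tau>\<in>injections G - {\<sigma>}. \<bar>P \<tau>\<bar>) \<le>
      (\<Sum>\<tau>\<in>injections G - {\<sigma>}. (\<Prod>j\<in>UNIV. \<kappa> (\<tau> j)) * P \<tau>)"
    unfolding sum_distrib_left using term_lower by (intro sum_mono) auto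
  moreover have "\<epsilon> * (\<Sum>\<tau>\<in>injections G - {\<sigma>}. \<bar>P \<tau>\<bar>) \<le> \<epsilon> * B"
    unfolding B_def using \<epsilon>(1) finite_injections[OF \<open>finite G\<close>]
    by (intro mult_left_mono sum_mono2) auto
  ultimately have "injection_poly G P \<kappa> > 0"
    using \<epsilon>(3) by linarith
  then show ?thesis
    using \<kappa>_pos by blast
qed

lemma injection_poly_zero_if_mixed_signs:
  fixes P :: "('n::finite \<Rightarrow> 'a) \<Rightarrow> real"
  assumes "finite G" and \<sigma>: "\<sigma> \<in> injections G" "P \<sigma> > 0" and \<tau>: "\<tau> \<in> injections G" "P \<tau> < 0"
    and range_inv: "\<And>\<sigma> \<tau>. \<sigma> \<in> injections G \<Longrightarrow> \<tau> \<in> injections G \<Longrightarrow> range \<sigma> = range \<tau> \<Longrightarrow> P \<sigma> = P \<tau>"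
  shows "\<exists>\<kappa>. (\<forall>r. \<kappa> r > 0) \<and> injection_poly G P \<kappa> = 0"
proof -
  obtain \<kappa>\<^sub>1 where \<kappa>\<^sub>1: "\<forall>r. \<kappa>\<^sub>1 r > 0" "injection_poly G P \<kappa>\<^sub>1 > 0"
    using injection_poly_pos_witness[of G \<sigma> P, OF \<open>finite G\<close> \<sigma> range_inv] by blast
  have "\<exists>\<kappa>. (\<forall>r. \<kappa> r > 0) \<and> injection_poly G (\<lambda>\<rho>. - 1 * P \<rho>) \<kappa> > 0"
  proof (rule injection_poly_pos_witness[OF \<open>finite G\<close> \<tau>(1)])
    show "- 1 * P \<rho> = - 1 * P \<rho>'"
      if "\<rho> \<in> injections G" "\<rho>' \<in> injections G" "range \<rho> = range \<rho>'" for \<rho> \<rho>'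
      using range_inv[OF that] by simp
  qed (use \<tau>(2) in simp)
  then obtain \<kappa>\<^sub>2 where \<kappa>\<^sub>2: "\<forall>r. \<kappa>\<^sub>2 r > 0" "injection_poly G P \<kappa>\<^sub>2 < 0"
    unfolding injection_poly_scale by auto
  define \<kappa> where "\<kappa> t r = (1 - t) * \<kappa>\<^sub>1 r + t * \<kappa>\<^sub>2 r" for t r
  have "continuous_on {0..1} (\<lambda>t. injection_poly G P (\<kappa> t))"
    unfolding injection_poly_def \<kappa>_def by (intro continuous_intros)
  moreover have "\<kappa> 0 = \<kappa>\<^sub>1" "\<kappa> 1 = \<kappa>\<^sub>2"
    by (simp_all add: \<kappa>_def fun_eq_iff)
  then have "injection_poly G P (\<kappa> 1) \<le> 0" "0 \<le> injection_poly G P (\<kappa> 0)"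
    using \<kappa>\<^sub>1(2) \<kappa>\<^sub>2(2) by simp_all
  ultimately obtain t where "0 \<le> t" "t \<le> 1" "injection_poly G P (\<kappa> t) = 0"
    using IVT2'[of "\<lambda>t. injection_poly G P (\<kappa> t)" 1 0 0] by auto
  moreover have "\<forall>r. \<kappa> t r > 0"
  proof
    fix r
    have "(1 - t) * (- \<kappa>\<^sub>1 r) + t * (- \<kappa>\<^sub>2 r) < 0"
      using \<kappa>\<^sub>1(1) \<kappa>\<^sub>2(1) \<open>0 \<le> t\<close> \<open>t \<le> 1\<close> by (intro convex_bound_lt) auto
    then show "\<kappa> t r > 0"
      by (simp add: \<kappa>_def)
  qed
  ultimately show ?thesis
    by blast
qed

lemma injection_poly_nonzero_if_same_sign:
  fixes P :: "('n::finite \<Rightarrow> 'a) \<Rightarrow> real"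
  assumes "finite G" and \<sigma>: "\<sigma> \<in> injections G" "P \<sigma> \<noteq> 0"
    and same_sign: "\<forall>\<tau>\<in>injections G. P \<tau> \<noteq> 0 \<longrightarrow> sgn (P \<tau>) = sgn (P \<sigma>)"
    and \<kappa>: "\<forall>r\<in>G. \<kappa> r > 0"
  shows "injection_poly G P \<kappa> \<noteq> 0"
proof -
  have pos: "sgn (P \<sigma>) * P \<sigma> > 0"
    using \<sigma>(2) abs_sgn[of "P \<sigma>"] by (simp add: mult.commute)
  have nonneg: "\<forall>\<tau>\<in>injections G. sgn (P \<sigma>) * P \<tau> \<ge> 0"
  proof
    fix \<tau> :: "'n \<Rightarrow> 'a"
    assume "\<tau> \<in> injections G"
    then show "sgn (P \<sigma>) * P \<tau> \<ge> 0"
      using same_sign abs_sgn[of "P \<tau>"] by (cases "P \<tau> = 0") (simp_all add: mult.commute)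
  qed
  have "sgn (P \<sigma>) * injection_poly G P \<kappa> > 0"
    using injection_poly_pos[OF \<open>finite G\<close> \<sigma>(1) pos nonneg \<kappa>] by (simp add: injection_poly_scale)
  then show ?thesis
    by auto
qed

lemma injection_poly_nonvanishing_iff:
  fixes P :: "('n::finite \<Rightarrow> 'a) \<Rightarrow> real"
  assumes "finite G"
    and range_inv: "\<And>\<sigma> \<tau>. \<sigma> \<in> injections G \<Longrightarrow> \<tau> \<in> injections G \<Longrightarrow> range \<sigma> = range \<tau> \<Longrightarrow> P \<sigma> = P \<tau>"
  shows "(\<forall>\<kappa>. (\<forall>r\<in>G. \<kappa> r > 0) \<longrightarrow> injection_poly G P \<kappa> \<noteq> 0) \<longleftrightarrow>
    (\<forall>\<sigma>\<in>injections G. \<forall>\<tau>\<in>injections G. P \<sigma> \<noteq> 0 \<and> P \<tau> \<noteq> 0 \<longrightarrow> sgn (P \<sigma>) = sgn (P \<tau>)) \<and>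
    (\<exists>\<sigma>\<in>injections G. P \<sigma> \<noteq> 0)"
  (is "?nonvanishing \<longleftrightarrow> ?same_sign \<and> ?nonzero")
proof
  assume nonvanishing: ?nonvanishing
  have no_mixed_signs: False
    if mixed: "\<sigma> \<in> injections G" "\<tau> \<in> injections G" "P \<sigma> > 0" "P \<tau> < 0" for \<sigma> \<tau> :: "'n \<Rightarrow> 'a"
  proof -
    obtain \<kappa> where "\<forall>r. \<kappa> r > 0" "injection_poly G P \<kappa> = 0"
      using injection_poly_zero_if_mixed_signs[OF \<open>finite G\<close> mixed(1,3) mixed(2,4) range_inv] by blast
    with nonvanishing show False
      by auto
  qed
  have ?same_sign
  proof (intro ballI impI)
    fix \<sigma> \<tau> :: "'n \<Rightarrow> 'a"
    assume "\<sigma> \<in> injections G" "\<tau> \<in> injections G" "P \<sigma> \<noteq> 0 \<and> P \<tau> \<noteq> 0"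
    then show "sgn (P \<sigma>) = sgn (P \<tau>)"
      using no_mixed_signs[of \<sigma> \<tau>] no_mixed_signs[of \<tau> \<sigma>] by (smt (verit) sgn_neg sgn_pos)
  qed
  moreover have ?nonzero
  proof (rule ccontr)
    assume "\<not> ?nonzero"
    then have "injection_poly G P (\<lambda>_. 1) = 0"
      by (simp add: injection_poly_def)
    then show False
      using nonvanishing by auto
  qed
  ultimately show "?same_sign \<and> ?nonzero" ..
next
  assume "?same_sign \<and> ?nonzero"
  then obtain \<sigma> where "\<sigma> \<in> injections G" "P \<sigma> \<noteq> 0"
    and "\<forall>\<tau>\<in>injections G. P \<tau> \<noteq> 0 \<longrightarrow> sgn (P \<tau>) = sgn (P \<sigma>)"
    by blast
  then show ?nonvanishing
    using injection_poly_nonzero_if_same_sign[OF \<open>finite G\<close>] by blast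
qed

lemma column_cols_matrix: "column i (cols_matrix v) = v i"
  by (simp add: column_def cols_matrix_def vec_eq_iff)

lemma det_cols_matrix_eq_0_if_not_inj:
  assumes "\<not> inj v"
  shows "det (cols_matrix v) = 0"
proof -
  obtain i j where "i \<noteq> j" "v i = v j"
    using assms by (auto simp: inj_def)
  then show ?thesis
    by (intro det_identical_columns[of i j]) (simp_all add: column_cols_matrix)
qed

lemma det_cols_matrix_comp_permutation:
  assumes "p permutes UNIV"
  shows "det (cols_matrix (v \<circ> p)) = of_int (sign p) * det (cols_matrix v)"
proof -
  have "cols_matrix (v \<circ> p) = (\<chi> i j. cols_matrix v $ i $ p j)"
    by (simp add: cols_matrix_def vec_eq_iff)
  then show ?thesis
    using det_permute_columns[OF assms] by simp
qed

lemma det_cols_matrix_eq_sum_permutations: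
  "det (cols_matrix v) = (\<Sum>p | p permutes UNIV. of_int (sign p) * (\<Prod>i\<in>UNIV. v i $ p i))"
proof -
  have "transpose (cols_matrix v) = (\<chi> i j. v i $ j)"
    by (simp add: transpose_def cols_matrix_def vec_eq_iff)
  then have "det (cols_matrix v) = det (\<chi> i j. v i $ j)"
    by (metis det_transpose)
  then show ?thesis
    by (simp add: det_def)
qed

lemma det_sum_outer_products:
  fixes a b :: "'a \<Rightarrow> real^'n::finite"
  assumes "finite G"
  shows "det (\<chi> i j. \<Sum>r\<in>G. \<kappa> r * a r $ i * b r $ j) =
    (\<Sum>\<sigma>\<in>injections G. (\<Prod>i\<in>UNIV. \<kappa> (\<sigma> i) * a (\<sigma> i) $ i) * det (cols_matrix (b \<circ> \<sigma>)))"
proof -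
  let ?perms = "{p. p permutes (UNIV :: 'n set)}" and ?funs = "PiE (UNIV :: 'n set) (\<lambda>_. G)"
  let ?weight = "\<lambda>\<sigma>. \<Prod>i\<in>UNIV. \<kappa> (\<sigma> i) * a (\<sigma> i) $ i"
  have "det (\<chi> i j. \<Sum>r\<in>G. \<kappa> r * a r $ i * b r $ j) =
      (\<Sum>p\<in>?perms. of_int (sign p) * (\<Prod>i\<in>UNIV. \<Sum>r\<in>G. \<kappa> r * a r $ i * b r $ p i))"
    by (simp add: det_def)
  also have "\<dots> = (\<Sum>p\<in>?perms. \<Sum>\<sigma>\<in>?funs. of_int (sign p) * (?weight \<sigma> * (\<Prod>i\<in>UNIV. b (\<sigma> i) $ p i)))"
    using assms by (simp add: prod_sum_PiE prod.distrib sum_distrib_left)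
  also have "\<dots> = (\<Sum>\<sigma>\<in>?funs. ?weight \<sigma> * det (cols_matrix (b \<circ> \<sigma>)))"
    by (subst sum.swap) (simp add: det_cols_matrix_eq_sum_permutations sum_distrib_left mult_ac)
  also have "\<dots> = (\<Sum>\<sigma>\<in>injections G. ?weight \<sigma> * det (cols_matrix (b \<circ> \<sigma>)))"
    using det_cols_matrix_eq_0_if_not_inj assms
    by (intro sum.mono_neutral_right finite_PiE)
      (auto simp: injections_def PiE_UNIV_domain dest: inj_on_imageI2)
  finally show ?thesis .
qed

lemma sum_injections_comp_permutation:
  assumes "p permutes UNIV"
  shows "(\<Sum>\<sigma>\<in>injections G. h (\<sigma> \<circ> p)) = (\<Sum>\<sigma>\<in>injections G. h \<sigma>)"
proof (rule sum.reindex_bij_witness[where i = "\<lambda>\<sigma>. \<sigma> \<circ> inv p" and j = "\<lambda>\<sigma>. \<sigma> \<circ> p"])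
  have range_comp: "range (\<sigma> \<circ> q) = range \<sigma>" if "q permutes UNIV" for \<sigma> q
    by (simp only: image_comp[symmetric] permutes_image[OF that])
  show "\<sigma> \<circ> p \<in> injections G" "\<sigma> \<circ> inv p \<in> injections G" if "\<sigma> \<in> injections G" for \<sigma>
    using that assms permutes_inv[OF assms] range_comp
    by (auto simp: injections_def intro: inj_compose permutes_inj)
  show "\<sigma> \<circ> p \<circ> inv p = \<sigma>" "\<sigma> \<circ> inv p \<circ> p = \<sigma>" if "\<sigma> \<in> injections G" for \<sigma>
    using permutes_inv_o[OF assms] by (simp_all add: comp_assoc)
qed simp

lemma sum_permutations_comp_weight_det:
  fixes a b :: "'a \<Rightarrow> real^'n::finite"
  shows "(\<Sum>p | p permutes UNIV. (\<Prod>i\<in>UNIV. \<kappa> (\<sigma> (p i)) * a (\<sigma> (p i)) $ i) * det (cols_matrix (b \<circ> \<sigma> \<circ> p))) =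
    (\<Prod>i\<in>UNIV. \<kappa> (\<sigma> i)) * (det (cols_matrix (a \<circ> \<sigma>)) * det (cols_matrix (b \<circ> \<sigma>)))"
proof -
  have "(\<Prod>i\<in>UNIV. \<kappa> (\<sigma> (p i)) * a (\<sigma> (p i)) $ i) * det (cols_matrix (b \<circ> \<sigma> \<circ> p)) =
      (\<Prod>i\<in>UNIV. \<kappa> (\<sigma> i)) * det (cols_matrix (b \<circ> \<sigma>)) * (of_int (sign p) * (\<Prod>i\<in>UNIV. a (\<sigma> (p i)) $ i))"
    if "p permutes UNIV" for p
    using prod.permute[OF that, of "\<lambda>i. \<kappa> (\<sigma> i)"] det_cols_matrix_comp_permutation[OF that, of "b \<circ> \<sigma>"]
    by (simp add: prod.distrib mult_ac)
  then have "(\<Sum>p | p permutes UNIV. (\<Prod>i\<in>UNIV. \<kappa> (\<sigma> (p i)) * a (\<sigma> (p i)) $ i) * det (cols_matrix (b \<circ> \<sigma> \<circ> p))) =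
      (\<Prod>i\<in>UNIV. \<kappa> (\<sigma> i)) * det (cols_matrix (b \<circ> \<sigma>)) *
      (\<Sum>p | p permutes UNIV. of_int (sign p) * (\<Prod>i\<in>UNIV. a (\<sigma> (p i)) $ i))"
    by (simp add: sum_distrib_left)
  also have "(\<Sum>p | p permutes UNIV. of_int (sign p) * (\<Prod>i\<in>UNIV. a (\<sigma> (p i)) $ i)) =
      det (cols_matrix (a \<circ> \<sigma>))"
    by (simp add: det_def cols_matrix_def)
  finally show ?thesis
    by (simp add: mult_ac comp_def)
qed

lemma fact_card_mult_det_sum_outer_products:
  fixes a b :: "'a \<Rightarrow> real^'n::finite"
  assumes "finite G"
  shows "fact CARD('n) * det (\<chi> i j. \<Sum>r\<in>G. \<kappa> r * a r $ i * b r $ j) =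
    injection_poly G (\<lambda>\<sigma>. det (cols_matrix (a \<circ> \<sigma>)) * det (cols_matrix (b \<circ> \<sigma>))) \<kappa>"
proof -
  let ?perms = "{p. p permutes (UNIV :: 'n set)}"
  let ?term = "\<lambda>\<sigma>. (\<Prod>i\<in>UNIV. \<kappa> (\<sigma> i) * a (\<sigma> i) $ i) * det (cols_matrix (b \<circ> \<sigma>))"
  have "card ?perms = fact CARD('n)"
    by (rule card_permutations) simp_all
  then have "fact CARD('n) * det (\<chi> i j. \<Sum>r\<in>G. \<kappa> r * a r $ i * b r $ j) =
      (\<Sum>p\<in>?perms. \<Sum>\<sigma>\<in>injections G. ?term \<sigma>)"
    by (simp add: det_sum_outer_products[OF assms])
  also have "\<dots> = (\<Sum>p\<in>?perms. \<Sum>\<sigma>\<in>injections G. ?term (\<sigma> \<circ> p))"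
    by (intro sum.cong refl sum_injections_comp_permutation[symmetric]) simp
  also have "\<dots> = (\<Sum>\<sigma>\<in>injections G. \<Sum>p\<in>?perms. ?term (\<sigma> \<circ> p))"
    by (rule sum.swap)
  also have "\<dots> = injection_poly G (\<lambda>\<sigma>. det (cols_matrix (a \<circ> \<sigma>)) * det (cols_matrix (b \<circ> \<sigma>))) \<kappa>"
    using sum_permutations_comp_weight_det[of \<kappa> _ a b] by (simp add: injection_poly_def comp_assoc)
  finally show ?thesis .
qed

definition reaction_vector :: "'n::finite reaction \<Rightarrow> real^'n" where
  "reaction_vector r = real_vec (snd r) - real_vec (fst r)"

definition reaction_matrix :: "'n::finite reaction set \<Rightarrow> ('n reaction \<Rightarrow> real) \<Rightarrow> real^'n^'n" where
  "reaction_matrix G \<kappa> = (\<chi> i j. \<Sum>r\<in>G. \<kappa> r * reaction_vector r $ i * real_vec (fst r) $ j)"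

lemma fact_card_mult_det_reaction_matrix:
  fixes G :: "'n::finite reaction set"
  assumes "finite G"
  shows "fact CARD('n) * det (reaction_matrix G \<kappa>) = injection_poly G det_product \<kappa>"
proof -
  have det_product_eq: "det_product = (\<lambda>\<sigma>.
      det (cols_matrix (reaction_vector \<circ> \<sigma>)) * det (cols_matrix ((\<lambda>r. real_vec (fst r)) \<circ> \<sigma>)))"
    by (simp add: fun_eq_iff det_product_def reaction_vector_def o_def mult.commute)
  show ?thesis
    unfolding det_product_eq reaction_matrix_def by (rule fact_card_mult_det_sum_outer_products[OF assms])
qed

lemma det_product_comp_permutation:
  assumes "p permutes UNIV"
  shows "det_product (\<sigma> \<circ> p) = det_product \<sigma>"
proof -
  have "real_of_int (sign p) * real_of_int (sign p) = 1"
    by (simp flip: of_int_mult)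
  moreover have "det_product (\<sigma> \<circ> p) = real_of_int (sign p) * real_of_int (sign p) * det_product \<sigma>"
    using det_cols_matrix_comp_permutation[OF assms, of "\<lambda>i. real_vec (fst (\<sigma> i))"]
      det_cols_matrix_comp_permutation[OF assms, of "\<lambda>i. real_vec (snd (\<sigma> i)) - real_vec (fst (\<sigma> i))"]
    by (simp add: det_product_def o_def mult_ac)
  ultimately show ?thesis
    by simp
qed

lemma det_product_eq_if_range_eq:
  assumes "inj \<sigma>" "inj \<tau>" "range \<sigma> = range \<tau>"
  shows "det_product \<sigma> = det_product \<tau>"
proof -
  define p where "p = inv \<sigma> \<circ> \<tau>"
  have \<tau>_eq: "\<tau> = \<sigma> \<circ> p"
    using assms(3) by (auto simp: p_def fun_eq_iff f_inv_into_f)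
  then have "inj p"
    using assms(2) inj_on_imageI2 by metis
  then have "p permutes UNIV"
    by (intro bij_imp_permutes) (simp_all add: bij_betw_def finite_UNIV_inj_surj)
  then show ?thesis
    by (simp add: \<tau>_eq det_product_comp_permutation)
qed

lemma det_eq_0_iff_kernel:
  fixes A :: "real^'n^'n"
  shows "det A = 0 \<longleftrightarrow> (\<exists>x. x \<noteq> 0 \<and> A *v x = 0)"
  using rank_bound[of A] by (auto simp: det_eq_0_rank matrix_nonfull_linear_equations_eq)

definition exp_diff_quot :: "real \<Rightarrow> real" where
  "exp_diff_quot s = (if s = 0 then 1 else (exp s - 1) / s)"

lemma exp_diff_quot_pos: "exp_diff_quot s > 0"
proof (cases "s > 0")
  case False
  then have "s = 0 \<or> (s < 0 \<and> exp s < 1)"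
    by auto
  then show ?thesis
    by (auto simp: exp_diff_quot_def divide_neg_neg)
qed (simp add: exp_diff_quot_def)

lemma exp_minus_one_eq: "exp s - 1 = s * exp_diff_quot s"
  by (simp add: exp_diff_quot_def)

definition ln_vec :: "real^'n \<Rightarrow> real^'n" where
  "ln_vec x = (\<chi> i. ln (x $ i))"

lemma monom_pos: "x \<in> pos_orthant \<Longrightarrow> monom x y > 0"
  by (simp add: monom_def pos_orthant_def prod_pos)

lemma monom_eq_exp_inner: "x \<in> pos_orthant \<Longrightarrow> monom x y = exp (real_vec y \<bullet> ln_vec x)"
  by (simp add: monom_def pos_orthant_def inner_vec_def real_vec_def ln_vec_def exp_sum ln_realpow[symmetric])

lemma reaction_matrix_mult_vec:
  "reaction_matrix G \<kappa> *v w = (\<Sum>r\<in>G. (\<kappa> r * (real_vec (fst r) \<bullet> w)) *\<^sub>R reaction_vector r)"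
  by (simp add: vec_eq_iff reaction_matrix_def matrix_vector_mult_def inner_vec_def sum_component
      sum_distrib_left sum_distrib_right mult_ac sum.swap[of _ G])

lemma mass_action_diff_eq_reaction_matrix:
  assumes "a \<in> pos_orthant" "b \<in> pos_orthant"
  defines "w \<equiv> ln_vec a - ln_vec b"
  shows "mass_action G k a - mass_action G k b =
    reaction_matrix G (\<lambda>r. k r * monom b (fst r) * exp_diff_quot (real_vec (fst r) \<bullet> w)) *v w"
proof -
  have monom_diff:
    "monom a y - monom b y = monom b y * exp_diff_quot (real_vec y \<bullet> w) * (real_vec y \<bullet> w)" for y
  proof -
    have "monom a y = monom b y * exp (real_vec y \<bullet> w)"
      using assms by (simp add: monom_eq_exp_inner inner_diff_right exp_diff)
    then show ?thesis
      using exp_minus_one_eq[of "real_vec y \<bullet> w"] by (simp add: algebra_simps)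
  qed
  have "mass_action G k a - mass_action G k b =
      (\<Sum>r\<in>G. (k r * (monom a (fst r) - monom b (fst r))) *\<^sub>R reaction_vector r)"
    by (simp add: mass_action_def reaction_vector_def sum_subtractf[symmetric] right_diff_distrib
        scaleR_left_diff_distrib)
  then show ?thesis
    by (simp add: reaction_matrix_mult_vec monom_diff mult_ac)
qed

lemma not_injective_if_det_reaction_matrix_eq_0:
  fixes G :: "'n::finite reaction set"
  assumes \<kappa>: "\<forall>r\<in>G. \<kappa> r > 0" and "det (reaction_matrix G \<kappa>) = 0"
  shows "\<not> injective_network G"
proof -
  obtain w where w: "w \<noteq> 0" "reaction_matrix G \<kappa> *v w = 0"
    using assms(2) det_eq_0_iff_kernel by blast
  define a :: "real^'n" where "a = (\<chi> i. exp (w $ i))"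
  define k where "k r = \<kappa> r / exp_diff_quot (real_vec (fst r) \<bullet> w)" for r
  have a: "a \<in> pos_orthant" and one: "1 \<in> pos_orthant"
    by (simp_all add: pos_orthant_def a_def)
  have "ln_vec a - ln_vec 1 = w"
    by (simp add: ln_vec_def a_def vec_eq_iff)
  moreover have "(\<lambda>r. k r * monom 1 (fst r) * exp_diff_quot (real_vec (fst r) \<bullet> w)) = \<kappa>"
    using exp_diff_quot_pos[THEN less_imp_neq] by (simp add: fun_eq_iff k_def monom_def)
  ultimately have "mass_action G k a - mass_action G k 1 = reaction_matrix G \<kappa> *v w"
    using mass_action_diff_eq_reaction_matrix[OF a one, of G k] by simp
  then have "mass_action G k a = mass_action G k 1"
    using w(2) by simp
  moreover have "a \<noteq> 1"
    using w(1) by (auto simp: a_def vec_eq_iff)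
  moreover have "\<forall>r\<in>G. k r > 0"
    using \<kappa> exp_diff_quot_pos by (simp add: k_def)
  ultimately show ?thesis
    using a one unfolding injective_network_def inj_on_def by blast
qed

lemma injective_if_det_reaction_matrix_ne_0:
  assumes nonsingular: "\<forall>\<kappa>. (\<forall>r\<in>G. \<kappa> r > 0) \<longrightarrow> det (reaction_matrix G \<kappa>) \<noteq> 0"
  shows "injective_network G"
  unfolding injective_network_def
proof (intro allI impI inj_onI)
  fix k a b
  assume k: "\<forall>r\<in>G. k r > 0" and a: "a \<in> pos_orthant" and b: "b \<in> pos_orthant"
    and eq: "mass_action G k a = mass_action G k b"
  define \<kappa> where
    "\<kappa> r = k r * monom b (fst r) * exp_diff_quot (real_vec (fst r) \<bullet> (ln_vec a - ln_vec b))" for r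
  have "\<forall>r\<in>G. \<kappa> r > 0"
    using k monom_pos[OF b] exp_diff_quot_pos by (simp add: \<kappa>_def)
  then have "det (reaction_matrix G \<kappa>) \<noteq> 0"
    using nonsingular by blast
  moreover have "reaction_matrix G \<kappa> *v (ln_vec a - ln_vec b) = 0"
    using mass_action_diff_eq_reaction_matrix[OF a b, of G k] eq by (simp add: \<kappa>_def[abs_def])
  ultimately have "ln_vec a - ln_vec b = 0"
    using det_eq_0_iff_kernel by blast
  then show "a = b"
    using a b by (simp add: ln_vec_def vec_eq_iff pos_orthant_def)
qed

lemma injective_network_iff_det_reaction_matrix:
  "injective_network G \<longleftrightarrow> (\<forall>\<kappa>. (\<forall>r\<in>G. \<kappa> r > 0) \<longrightarrow> det (reaction_matrix G \<kappa>) \<noteq> 0)"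
  using not_injective_if_det_reaction_matrix_eq_0 injective_if_det_reaction_matrix_ne_0 by blast

theorem corollary2p2:
  fixes G :: "'n::finite reaction set"
  assumes "reaction_network G"
  shows "injective_network G \<longleftrightarrow>
    ((\<forall>\<sigma> \<tau>. inj \<sigma> \<and> \<sigma> ` UNIV \<subseteq> G \<and> inj \<tau> \<and> \<tau> ` UNIV \<subseteq> G \<and>
              det_product \<sigma> \<noteq> 0 \<and> det_product \<tau> \<noteq> 0
              \<longrightarrow> sgn (det_product \<sigma>) = sgn (det_product \<tau>)) \<and>
     (\<exists>\<sigma>. inj \<sigma> \<and> \<sigma> ` UNIV \<subseteq> G \<and> det_product \<sigma> \<noteq> 0))"
proof -
  have fin: "finite G"
    using assms by (simp add: reaction_network_def)
  have "det (reaction_matrix G \<kappa>) \<noteq> 0 \<longleftrightarrow> injection_poly G det_product \<kappa> \<noteq> 0" for \<kappa>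
    unfolding fact_card_mult_det_reaction_matrix[OF fin, symmetric] by simp
  then have "injective_network G \<longleftrightarrow> (\<forall>\<kappa>. (\<forall>r\<in>G. \<kappa> r > 0) \<longrightarrow> injection_poly G det_product \<kappa> \<noteq> 0)"
    by (simp add: injective_network_iff_det_reaction_matrix)
  also have "\<dots> \<longleftrightarrow>
      (\<forall>\<sigma>\<in>injections G. \<forall>\<tau>\<in>injections G. det_product \<sigma> \<noteq> 0 \<and> det_product \<tau> \<noteq> 0
          \<longrightarrow> sgn (det_product \<sigma>) = sgn (det_product \<tau>)) \<and>
      (\<exists>\<sigma>\<in>injections G. det_product \<sigma> \<noteq> 0)"
    by (rule injection_poly_nonvanishing_iff[OF fin])
      (auto simp: injections_def intro: det_product_eq_if_range_eq)
  finally show ?thesis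
    unfolding injections_def by blast
qed

end
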